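(* Let $(W,W')$ be an exchangeable pair of real random variables and set $\Delta = W-W'$. Suppose that $$E(W-W'\mid W) = g(W) + r(W)$$ for a differentiable function $g:\mathbb{R}\to\mathbb{R}$ and a measurable function $r$. Let $c_0>0$ be a constant, let $G(t)=\int_0^t g(s)\,ds$, assume $\int_{-\infty}^\infty e^{-c_0G(t)}dt<\infty$, let $c_1 = 1/\int_{-\infty}^\infty e^{-c_0 G(t)}\,dt$, and let $Y$ be a random variable with density $p(t)=c_1e^{-c_0G(t)}$. Assume: (H1) $g$ is non-decreasing, $g(t)\ge 0$ for $t>0$ and $g(t)\le 0$ for $t\le 0$; (H3) there is $c_3<\infty$ such that for all $x$, $\min\big(1/c_1, 1/|c_0 g(x)|\big)\,(|x| + 3/c_1)\, c_0|g'(x)| \le c_3$. Assume moreover that $|W-W'|\le \delta$ for a constant $\delta$. Then for all real $z$, $$|P(W\le z) - P(Y\le z)| \le 3E\big|1-(c_0/2)E(\Delta^2\mid W)\big| + c_1\max(1,c_3)\,\delta + \frac{2c_0}{c_1}E|r(W)| + \delta^3 c_0\Big\{\big(2 + \tfrac{c_3}{2}\big)E|c_0 g(W)| + \tfrac{c_1c_3}{2}\Big\}.$$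
   Context: A pair $(W,W')$ is exchangeable if $(W,W')$ and $(W',W)$ have the same joint distribution. In (H3), $1/|c_0g(x)|$ is interpreted as $+\infty$ when $g(x)=0$. *)

theory Defs
  imports "HOL-Probability.Probability"
begin

definition Gfun :: "(real \<Rightarrow> real) \<Rightarrow> real \<Rightarrow> real" where
  "Gfun g t = (LBINT s=0..t. g s)"

text \<open>min(1/c1, 1/|c0 g x|), where 1/|c0 g x| is read as +infinity when g x = 0.\<close>
definition min_inv :: "real \<Rightarrow> real \<Rightarrow> (real \<Rightarrow> real) \<Rightarrow> real \<Rightarrow> real" where
  "min_inv c0 c1 g x = (if g x = 0 then 1 / c1 else min (1 / c1) (1 / \<bar>c0 * g x\<bar>))"

definition exchangeable :: "'a measure \<Rightarrow> ('a \<Rightarrow> real) \<Rightarrow> ('a \<Rightarrow> real) \<Rightarrow> bool" where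
  "exchangeable M W W' \<longleftrightarrow>
     distr M (borel \<Otimes>\<^sub>M borel) (\<lambda>\<omega>. (W \<omega>, W' \<omega>)) = distr M (borel \<Otimes>\<^sub>M borel) (\<lambda>\<omega>. (W' \<omega>, W \<omega>))"

end

theory Submission
  imports Defs
begin

text \<open>Stein's method for exchangeable pairs. Let \<open>F\<close> be the distribution function of \<open>Y\<close>.
  For each \<open>z\<close> the Stein equation \<open>f' - c0 g f = 1{\<cdot> \<le> z} - F z\<close> has a solution \<open>f\<^sub>z\<close>
  with \<open>0 \<le> f\<^sub>z \<le> 1/c1\<close> and \<open>|c0 g f\<^sub>z| \<le> 1\<close>, by Mills-ratio bounds for \<open>p\<close> that use the
  monotonicity of \<open>g\<close>; (H3) makes \<open>c0 g f\<^sub>z\<close> Lipschitz on \<open>\<delta>\<close>-neighbourhoods.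
  Exchangeability gives \<open>E[\<Delta> (f\<^sub>z W - f\<^sub>z W')] = 2 E[f\<^sub>z(W) (g W + r W)]\<close>, while a
  mean-value bound for \<open>f\<^sub>z\<close> over a step of length \<open>\<le> \<delta>\<close> compares the left-hand side with
  \<open>E[\<Delta>\<^sup>2 (c0 g f\<^sub>z + 1{\<cdot> \<le> z \<plusminus> \<delta>} - F z)(W)]\<close>. Conditioning on \<open>W\<close> replaces \<open>(c0/2) \<Delta>\<^sup>2\<close> by
  \<open>1\<close> up to the variance defect \<open>1 - (c0/2) E(\<Delta>\<^sup>2 | W)\<close>, and undoing the shift \<open>\<plusminus>\<delta>\<close> costs
  \<open>c1 \<delta>\<close> because \<open>p \<le> c1\<close>.\<close>

section \<open>Calculus and integration\<close>

lemma has_real_derivative_interval_integral: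
  fixes f :: "real \<Rightarrow> real" and c x :: real
  assumes cont: "continuous_on UNIV f"
  shows "((\<lambda>u::real. LBINT y=c..u. f y) has_real_derivative f x) (at x)"
proof -
  define a where "a = min c x - 1"
  define b where "b = max c x + 1"
  have "((\<lambda>u::real. LBINT y=c..u. f y) has_vector_derivative f x) (at x within {a..b})"
    by (rule interval_integral_FTC2) (use cont continuous_on_subset in \<open>auto simp: a_def b_def\<close>)
  then have "((\<lambda>u::real. LBINT y=c..u. f y) has_vector_derivative f x) (at x within {a<..<b})"
    by (rule has_vector_derivative_within_subset) auto
  then have "((\<lambda>u::real. LBINT y=c..u. f y) has_vector_derivative f x) (at x)"
    by (subst (asm) has_vector_derivative_within_open) (auto simp: a_def b_def)
  then show ?thesis by (simp add: has_real_derivative_iff_has_vector_derivative)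
qed

lemma increment_bounds_of_derivative_bounds:
  fixes f f' :: "real \<Rightarrow> real"
  assumes ab: "a \<le> b" and cont: "continuous_on {a..b} f"
    and der: "\<And>s. a < s \<Longrightarrow> s < b \<Longrightarrow> (f has_real_derivative f' s) (at s)"
    and bd: "\<And>s. a < s \<Longrightarrow> s < b \<Longrightarrow> m \<le> f' s \<and> f' s \<le> M"
  shows "m * (b - a) \<le> f b - f a \<and> f b - f a \<le> M * (b - a)"
proof (cases "a = b")
  case False
  with ab have lt: "a < b" by simp
  obtain l \<xi> where \<xi>: "a < \<xi>" "\<xi> < b" "DERIV f \<xi> :> l" and eq: "f b - f a = (b - a) * l"
    using MVT[OF lt cont] der real_differentiable_def by blast
  have "l = f' \<xi>" using DERIV_unique[OF \<xi>(3) der[OF \<xi>(1,2)]] .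
  with bd[OF \<xi>(1,2)] eq lt show ?thesis by (auto simp: mult.commute intro: mult_right_mono)
qed simp

lemma increment_bounds_of_derivative_bounds_except:
  fixes f f' :: "real \<Rightarrow> real"
  assumes ab: "a \<le> b" and cont: "continuous_on {a..b} f"
    and der: "\<And>s. a < s \<Longrightarrow> s < b \<Longrightarrow> s \<noteq> z \<Longrightarrow> (f has_real_derivative f' s) (at s)"
    and bd: "\<And>s. a < s \<Longrightarrow> s < b \<Longrightarrow> s \<noteq> z \<Longrightarrow> m \<le> f' s \<and> f' s \<le> M"
  shows "m * (b - a) \<le> f b - f a \<and> f b - f a \<le> M * (b - a)"
proof (cases "a < z \<and> z < b")
  case True
  have "m * (z - a) \<le> f z - f a \<and> f z - f a \<le> M * (z - a)"
    by (rule increment_bounds_of_derivative_bounds[where f'=f'])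
       (use True cont der bd in \<open>auto intro: continuous_on_subset\<close>)
  moreover have "m * (b - z) \<le> f b - f z \<and> f b - f z \<le> M * (b - z)"
    by (rule increment_bounds_of_derivative_bounds[where f'=f'])
       (use True cont der bd in \<open>auto intro: continuous_on_subset\<close>)
  ultimately show ?thesis by (auto simp: algebra_simps)
next
  case False
  show ?thesis
    by (rule increment_bounds_of_derivative_bounds[where f'=f']) (use False ab cont der bd in auto)
qed

lemma MVT_deriv_between:
  fixes f :: "real \<Rightarrow> real"
  assumes diff: "\<And>x. f differentiable (at x)"
  shows "\<exists>\<xi>. min a b \<le> \<xi> \<and> \<xi> \<le> max a b \<and> f b - f a = (b - a) * deriv f \<xi>"
proof -
  have MVT': "\<exists>\<xi>. a < \<xi> \<and> \<xi> < b \<and> f b - f a = (b - a) * deriv f \<xi>" if ab: "a < b" for a b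
  proof -
    have "continuous_on {a..b} f"
      using diff differentiable_imp_continuous_within continuous_at_imp_continuous_on by blast
    then obtain l \<xi> where "a < \<xi>" "\<xi> < b" "DERIV f \<xi> :> l" "f b - f a = (b - a) * l"
      using MVT[OF ab] diff by blast
    then show ?thesis by (metis DERIV_imp_deriv)
  qed
  consider "a < b" | "a = b" | "b < a" by linarith
  then show ?thesis
  proof cases
    case 1
    then obtain \<xi> where "a < \<xi>" "\<xi> < b" "f b - f a = (b - a) * deriv f \<xi>"
      using MVT' by blast
    then show ?thesis by (intro exI[of _ \<xi>]) auto
  next
    case 2
    then show ?thesis by (intro exI[of _ a]) simp
  next
    case 3
    then obtain \<xi> where "b < \<xi>" "\<xi> < a" "f a - f b = (a - b) * deriv f \<xi>"
      using MVT' by blast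
    then show ?thesis by (intro exI[of _ \<xi>]) (auto simp: algebra_simps)
  qed
qed

lemma integrable_bounded_mult:
  fixes f \<phi> :: "'a \<Rightarrow> real"
  assumes f: "integrable M f" and \<phi>: "\<phi> \<in> borel_measurable M" and bd: "AE x in M. \<bar>\<phi> x\<bar> \<le> B"
  shows "integrable M (\<lambda>x. \<phi> x * f x)"
proof (rule Bochner_Integration.integrable_bound[of M "\<lambda>x. B * f x"])
  show "AE x in M. norm (\<phi> x * f x) \<le> norm (B * f x)"
    using bd
  proof eventually_elim
    case (elim x)
    have "\<bar>\<phi> x\<bar> * \<bar>f x\<bar> \<le> \<bar>B\<bar> * \<bar>f x\<bar>" using elim by (intro mult_right_mono) auto
    then show ?case by (simp add: abs_mult)
  qed
qed (use f \<phi> in auto)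

lemma exchangeable_integral_antisym:
  fixes W W' :: "'a \<Rightarrow> real"
  assumes exch: "exchangeable M W W'"
    and [measurable]: "W \<in> borel_measurable M" "W' \<in> borel_measurable M" "f \<in> borel_measurable borel"
    and bd: "\<And>x. \<bar>f x\<bar> \<le> B" and D: "integrable M (\<lambda>\<omega>. W \<omega> - W' \<omega>)"
  shows "(\<integral>\<omega>. (W \<omega> - W' \<omega>) * f (W' \<omega>) \<partial>M) = - (\<integral>\<omega>. (W \<omega> - W' \<omega>) * f (W \<omega>) \<partial>M)"
proof -
  define \<phi> where "\<phi> = (\<lambda>(x::real, y::real). (x - y) * (f x + f y))"
  have [measurable]: "\<phi> \<in> borel_measurable (borel \<Otimes>\<^sub>M borel)" unfolding \<phi>_def by measurable
  have "integral\<^sup>L (distr M (borel \<Otimes>\<^sub>M borel) (\<lambda>\<omega>. (W \<omega>, W' \<omega>))) \<phi>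
      = integral\<^sup>L (distr M (borel \<Otimes>\<^sub>M borel) (\<lambda>\<omega>. (W' \<omega>, W \<omega>))) \<phi>"
    using exch by (simp add: exchangeable_def)
  then have "(\<integral>\<omega>. \<phi> (W \<omega>, W' \<omega>) \<partial>M) = (\<integral>\<omega>. - \<phi> (W \<omega>, W' \<omega>) \<partial>M)"
    by (simp add: integral_distr \<phi>_def algebra_simps)
  then have zero: "(\<integral>\<omega>. \<phi> (W \<omega>, W' \<omega>) \<partial>M) = 0" by simp
  have i1: "integrable M (\<lambda>\<omega>. (W \<omega> - W' \<omega>) * f (W \<omega>))"
    using integrable_bounded_mult[OF D, of "\<lambda>\<omega>. f (W \<omega>)" B] bd by (simp add: mult.commute)
  have i2: "integrable M (\<lambda>\<omega>. (W \<omega> - W' \<omega>) * f (W' \<omega>))"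
    using integrable_bounded_mult[OF D, of "\<lambda>\<omega>. f (W' \<omega>)" B] bd by (simp add: mult.commute)
  have "(\<integral>\<omega>. \<phi> (W \<omega>, W' \<omega>) \<partial>M)
      = (\<integral>\<omega>. (W \<omega> - W' \<omega>) * f (W \<omega>) \<partial>M) + (\<integral>\<omega>. (W \<omega> - W' \<omega>) * f (W' \<omega>) \<partial>M)"
    using i1 i2 by (simp add: \<phi>_def distrib_left)
  with zero show ?thesis by linarith
qed

section \<open>The target density and the solution of the Stein equation\<close>

locale potential_density =
  fixes g :: "real \<Rightarrow> real" and c0 c1 :: real and N :: "'b measure" and Y :: "'b \<Rightarrow> real"
  assumes g_diff: "\<And>x. g differentiable (at x)"
    and g_mono: "mono g" and g_pos: "\<And>t. t > 0 \<Longrightarrow> g t \<ge> 0" and g_nonpos: "\<And>t. t \<le> 0 \<Longrightarrow> g t \<le> 0"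
    and c0: "c0 > 0"
    and int_fin: "integrable lborel (\<lambda>t. exp (- c0 * Gfun g t))"
    and c1: "c1 = 1 / (\<integral>t. exp (- c0 * Gfun g t) \<partial>lborel)"
    and N: "prob_space N"
    and Y: "distributed N lborel Y (\<lambda>t. ennreal (c1 * exp (- c0 * Gfun g t)))"
begin

interpretation N: prob_space N by (rule N)

definition p :: "real \<Rightarrow> real" where "p t = c1 * exp (- c0 * Gfun g t)"

definition F :: "real \<Rightarrow> real" where "F x = measure N {y \<in> space N. Y y \<le> x}"

lemma g_cont: "continuous_on S g"
  using g_diff differentiable_imp_continuous_within continuous_at_imp_continuous_on by blast

lemma g_measurable [measurable]: "g \<in> borel_measurable borel"
  using g_cont by (rule borel_measurable_continuous_onI)

lemma Gfun_deriv: "(Gfun g has_real_derivative g x) (at x)"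
  unfolding Gfun_def using has_real_derivative_interval_integral[OF g_cont, of 0 x]
  by (simp add: zero_ereal_def)

lemma g_0: "g 0 = 0"
proof -
  have "(g \<longlongrightarrow> g 0) (at_right 0)"
    using g_cont[of UNIV] by (simp add: continuous_on_def filterlim_at_split)
  moreover have "eventually (\<lambda>t. 0 \<le> g t) (at_right (0::real))"
    by (simp add: eventually_at_filter g_pos)
  ultimately have "0 \<le> g 0"
    by (rule tendsto_lowerbound) simp
  with g_nonpos[of 0] show ?thesis by simp
qed

lemma g_nonneg: "t \<ge> 0 \<Longrightarrow> g t \<ge> 0"
  using g_pos g_0 by (cases "t = 0") auto

lemma Gfun_0: "Gfun g 0 = 0"
  by (simp add: Gfun_def interval_lebesgue_integral_def zero_ereal_def einterval_same
      set_lebesgue_integral_def)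

lemma Gfun_nonneg: "Gfun g t \<ge> 0"
proof (cases "t \<ge> 0")
  case True
  have "Gfun g 0 \<le> Gfun g t"
    by (rule deriv_nonneg_imp_mono[OF Gfun_deriv]) (use True g_nonneg in auto)
  then show ?thesis by (simp add: Gfun_0)
next
  case False
  have "- Gfun g t \<le> - Gfun g 0"
    by (rule deriv_nonneg_imp_mono[where g="\<lambda>x. - Gfun g x" and g'="\<lambda>x. - g x"])
       (use False g_nonpos in \<open>auto intro!: derivative_eq_intros Gfun_deriv\<close>)
  then show ?thesis by (simp add: Gfun_0)
qed

lemma c1_pos: "c1 > 0"
proof -
  have "(\<integral>t. exp (- c0 * Gfun g t) \<partial>lborel) \<noteq> 0"
  proof
    assume "(\<integral>t. exp (- c0 * Gfun g t) \<partial>lborel) = 0"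
    then have "AE x in lborel. exp (- c0 * Gfun g x) = 0"
      using integral_nonneg_eq_0_iff_AE[OF int_fin] by simp
    then have "ae_filter (lborel::real measure) = bot" by (simp add: trivial_limit_def)
    then show False by (simp add: ae_filter_eq_bot_iff emeasure_lborel_UNIV)
  qed
  moreover have "(\<integral>t. exp (- c0 * Gfun g t) \<partial>lborel) \<ge> 0" by (simp add: integral_nonneg)
  ultimately have "(\<integral>t. exp (- c0 * Gfun g t) \<partial>lborel) > 0" by linarith
  then show ?thesis using c1 by simp
qed

lemma p_pos: "p t > 0" using c1_pos by (simp add: p_def)

lemma p_le: "p t \<le> c1"
  using c1_pos Gfun_nonneg c0 by (simp add: p_def)

lemma p_0: "p 0 = c1" by (simp add: p_def Gfun_0)

lemma p_deriv: "(p has_real_derivative (- c0 * g x * p x)) (at x)"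
  unfolding p_def by (auto intro!: derivative_eq_intros Gfun_deriv)

lemma p_cont: "continuous_on S p"
  using p_deriv by (meson DERIV_isCont continuous_at_imp_continuous_on)

lemma p_integrable: "integrable lborel p"
  using int_fin unfolding p_def[abs_def] by simp

lemma F_eq_integral: "F x = (\<integral>t. indicator {..x} t * p t \<partial>lborel)"
proof -
  have "(\<integral>t. c1 * exp (- c0 * Gfun g t) * indicator {..x} t \<partial>lborel) = (\<integral>y. indicator {..x} (Y y) \<partial>N)"
    by (rule distributed_integral[OF Y]) (use c1_pos in auto)
  also have "\<dots> = measure N (Y -` {..x} \<inter> space N)"
    by (simp flip: indicator_vimage)
  also have "Y -` {..x} \<inter> space N = {y \<in> space N. Y y \<le> x}" by auto
  finally show ?thesis by (simp add: F_def p_def mult.commute)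
qed

lemma F_eq_cdf: "F = cdf (distr N borel Y)"
  using distributed_measurable[OF Y]
  by (auto simp: fun_eq_iff F_def cdf_def measure_distr vimage_def Int_def conj_commute)

interpretation Y: real_distribution "distr N borel Y"
  using distributed_measurable[OF Y] by simp

lemma F_mono: "x \<le> y \<Longrightarrow> F x \<le> F y"
  unfolding F_eq_cdf by (rule Y.cdf_nondecreasing)

lemma F_nonneg: "0 \<le> F x" by (simp add: F_def)

lemma F_le_1: "F x \<le> 1" by (simp add: F_def)

lemma F_at_bot: "(F \<longlongrightarrow> 0) at_bot"
  unfolding F_eq_cdf by (rule Y.cdf_lim_at_bot)

lemma F_at_top: "(F \<longlongrightarrow> 1) at_top"
  unfolding F_eq_cdf by (rule Y.cdf_lim_at_top_prob)

lemma F_diff_eq_interval_integral: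
  assumes "a \<le> b" shows "F b - F a = (LBINT t=a..b. p t)"
proof -
  have int: "integrable lborel (\<lambda>t. indicator {..c} t * p t)" for c
    using integrable_mult_indicator[OF _ p_integrable] by simp
  have "F b - F a = (\<integral>t. indicator {..b} t * p t - indicator {..a} t * p t \<partial>lborel)"
    unfolding F_eq_integral by (rule Bochner_Integration.integral_diff[OF int int, symmetric])
  also have "\<dots> = (\<integral>t. indicator {a<..b} t * p t \<partial>lborel)"
    by (rule Bochner_Integration.integral_cong) (use assms in \<open>auto simp: indicator_def\<close>)
  also have "\<dots> = (LBINT t=a..b. p t)"
    by (simp add: interval_integral_Ioc[OF assms] set_lebesgue_integral_def)
  finally show ?thesis .
qed

lemma F_deriv: "(F has_real_derivative p x) (at x)"
proof -
  have "F u = F 0 + (LBINT t=ereal 0..ereal u. p t)" for u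
  proof (cases "0 \<le> u")
    case False
    then show ?thesis
      using F_diff_eq_interval_integral[of u 0] interval_integral_endpoints_reverse[of "ereal 0" u p]
      by linarith
  qed (use F_diff_eq_interval_integral[of 0 u] in linarith)
  then have "F = (\<lambda>u. F 0 + (LBINT t=ereal 0..ereal u. p t))" by (rule ext)
  moreover have "((\<lambda>u. F 0 + (LBINT t=ereal 0..ereal u. p t)) has_real_derivative p x) (at x)"
    using DERIV_add[OF DERIV_const has_real_derivative_interval_integral[OF p_cont]] by simp
  ultimately show ?thesis by simp
qed

lemma F_cont: "continuous_on S F"
  using F_deriv by (meson DERIV_isCont continuous_at_imp_continuous_on)

lemma F_lipschitz: assumes "a \<le> b" shows "F b - F a \<le> c1 * (b - a)"
  using increment_bounds_of_derivative_bounds[OF assms F_cont F_deriv, of 0 c1] p_pos p_le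
  by (auto intro: less_imp_le)

lemma lower_tail_le_density: assumes x: "x \<le> 0" shows "c0 * (- g x) * F x \<le> p x"
proof -
  have key: "c0 * (- g x) * (F x - F a) \<le> p x - p a" if a: "a \<le> x" for a
  proof -
    define \<psi> where "\<psi> b = c0 * (- g x) * (F x - F b) - (p x - p b)" for b
    have "\<psi> a \<le> \<psi> x"
    proof (rule deriv_nonneg_imp_mono[where g=\<psi> and g'="\<lambda>b. c0 * p b * (g x - g b)"])
      fix b assume "b \<in> {a..x}"
      show "(\<psi> has_real_derivative c0 * p b * (g x - g b)) (at b)"
        unfolding \<psi>_def by (auto intro!: derivative_eq_intros F_deriv p_deriv simp: algebra_simps)
      have "g b \<le> g x" using \<open>b \<in> {a..x}\<close> g_mono by (auto simp: mono_def)
      then show "0 \<le> c0 * p b * (g x - g b)" using c0 p_pos[of b] by simp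
    qed (rule a)
    then show ?thesis by (simp add: \<psi>_def)
  qed
  have "((\<lambda>a. p x + c0 * (- g x) * F a) \<longlongrightarrow> p x + c0 * (- g x) * 0) at_bot"
    by (intro tendsto_intros F_at_bot)
  moreover have "\<forall>\<^sub>F a in at_bot. c0 * (- g x) * F x \<le> p x + c0 * (- g x) * F a"
    unfolding eventually_at_bot_linorder
  proof (intro exI allI impI)
    fix a assume "a \<le> x"
    then show "c0 * (- g x) * F x \<le> p x + c0 * (- g x) * F a"
      using key[of a] p_pos[of a] by (simp add: algebra_simps)
  qed
  ultimately show ?thesis
    by (intro tendsto_lowerbound[where F=at_bot]) (auto simp: algebra_simps)
qed

lemma upper_tail_le_density: assumes x: "0 \<le> x" shows "c0 * g x * (1 - F x) \<le> p x"
proof -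
  have key: "c0 * g x * (F b - F x) \<le> p x - p b" if b: "x \<le> b" for b
  proof -
    define \<psi> where "\<psi> b = p x - p b - c0 * g x * (F b - F x)" for b
    have "\<psi> x \<le> \<psi> b"
    proof (rule deriv_nonneg_imp_mono[where g=\<psi> and g'="\<lambda>b. c0 * p b * (g b - g x)"])
      fix t assume "t \<in> {x..b}"
      show "(\<psi> has_real_derivative c0 * p t * (g t - g x)) (at t)"
        unfolding \<psi>_def by (auto intro!: derivative_eq_intros F_deriv p_deriv simp: algebra_simps)
      have "g x \<le> g t" using \<open>t \<in> {x..b}\<close> g_mono by (auto simp: mono_def)
      then show "0 \<le> c0 * p t * (g t - g x)" using c0 p_pos[of t] by simp
    qed (rule b)
    then show ?thesis by (simp add: \<psi>_def)
  qed
  have "((\<lambda>b. c0 * g x * (F b - F x)) \<longlongrightarrow> c0 * g x * (1 - F x)) at_top"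
    by (intro tendsto_intros F_at_top)
  moreover have "\<forall>\<^sub>F b in at_top. c0 * g x * (F b - F x) \<le> p x"
    unfolding eventually_at_top_linorder
  proof (intro exI allI impI)
    fix b assume "x \<le> b"
    then show "c0 * g x * (F b - F x) \<le> p x" using key[of b] p_pos[of b] by linarith
  qed
  ultimately show ?thesis
    by (intro tendsto_upperbound[where F=at_top]) auto
qed

definition tail_ratio :: "real \<Rightarrow> real" where
  "tail_ratio x = (if x \<le> 0 then F x else 1 - F x) / p x"

text \<open>The Mills-type bounds above make \<open>tail_ratio\<close> increase on \<open>(-\<infinity>, 0]\<close> and decrease on
  \<open>[0, \<infinity>)\<close>, so it is maximal at \<open>0\<close>, where \<open>p 0 = c1\<close>.\<close>
lemma tail_ratio_le: "tail_ratio x \<le> 1 / c1"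
proof (cases "x \<le> 0")
  case True
  have "F x / p x \<le> F 0 / p 0"
  proof (rule deriv_nonneg_imp_mono[where g="\<lambda>t. F t / p t" and g'="\<lambda>t. 1 + c0 * g t * F t / p t"])
    fix t assume t: "t \<in> {x..0}"
    show "((\<lambda>t. F t / p t) has_real_derivative 1 + c0 * g t * F t / p t) (at t)"
      using p_pos[of t] by (auto intro!: derivative_eq_intros F_deriv p_deriv simp: field_simps power2_eq_square)
    have "c0 * (- g t) * F t \<le> p t" using t lower_tail_le_density by simp
    then show "0 \<le> 1 + c0 * g t * F t / p t" using p_pos[of t] by (simp add: field_simps)
  qed (rule True)
  also have "\<dots> \<le> 1 / c1" using F_le_1[of 0] c1_pos by (simp add: p_0 divide_right_mono)
  finally show ?thesis using True by (simp add: tail_ratio_def)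
next
  case False
  have "(1 - F x) / p x \<le> (1 - F 0) / p 0"
  proof (rule deriv_nonpos_imp_antimono[where g="\<lambda>t. (1 - F t) / p t" and g'="\<lambda>t. c0 * g t * (1 - F t) / p t - 1"])
    fix t assume t: "t \<in> {0..x}"
    show "((\<lambda>t. (1 - F t) / p t) has_real_derivative c0 * g t * (1 - F t) / p t - 1) (at t)"
      using p_pos[of t] by (auto intro!: derivative_eq_intros F_deriv p_deriv simp: field_simps power2_eq_square)
    have "c0 * g t * (1 - F t) \<le> p t" using t upper_tail_le_density by simp
    then show "c0 * g t * (1 - F t) / p t - 1 \<le> 0" using p_pos[of t] by simp
  qed (use False in simp)
  also have "\<dots> \<le> 1 / c1" using F_nonneg[of 0] c1_pos by (simp add: p_0 divide_right_mono)
  finally show ?thesis using False by (simp add: tail_ratio_def)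
qed

lemma g_tail_ratio_le: "c0 * \<bar>g x\<bar> * tail_ratio x \<le> 1"
proof (cases "x \<le> 0")
  case True
  then have "c0 * \<bar>g x\<bar> * tail_ratio x = c0 * (- g x) * F x / p x"
    using g_nonpos[of x] by (simp add: tail_ratio_def)
  also have "\<dots> \<le> 1"
    using lower_tail_le_density[OF True] p_pos[of x] by (simp add: le_divide_eq)
  finally show ?thesis .
next
  case False
  then have "c0 * \<bar>g x\<bar> * tail_ratio x = c0 * g x * (1 - F x) / p x"
    using g_pos[of x] by (simp add: tail_ratio_def)
  also have "\<dots> \<le> 1"
    using upper_tail_le_density[of x] False p_pos[of x] by (simp add: divide_le_eq)
  finally show ?thesis .
qed

text \<open>The bounded solution \<open>f\<^sub>z\<close> of the Stein equation
  \<open>f' - c0 g f = 1{x \<le> z} - F z\<close>, obtained by variation of constants.\<close>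
definition stein_sol :: "real \<Rightarrow> real \<Rightarrow> real" where
  "stein_sol z x = (F (min x z) - F z * F x) / p x"

definition stein_drift :: "real \<Rightarrow> real \<Rightarrow> real" where
  "stein_drift z x = c0 * g x * stein_sol z x"

lemma stein_sol_nonneg: "0 \<le> stein_sol z x"
proof -
  have "0 \<le> F (min x z) - F z * F x"
  proof (cases "x \<le> z")
    case True
    then have "F (min x z) - F z * F x = F x * (1 - F z)" by (simp add: algebra_simps)
    then show ?thesis using F_nonneg[of x] F_le_1[of z] by simp
  next
    case False
    then have "F (min x z) - F z * F x = F z * (1 - F x)" by (simp add: algebra_simps)
    then show ?thesis using F_nonneg[of z] F_le_1[of x] by simp
  qed
  then show ?thesis using p_pos[of x] by (simp add: stein_sol_def)
qed

lemma stein_sol_le_tail_ratio: "stein_sol z x \<le> tail_ratio x"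
proof -
  have "F (min x z) - F z * F x \<le> F x * (1 - F x)"
  proof (cases "x \<le> z")
    case True
    then have "F (min x z) - F z * F x = F x * (1 - F z)" by (simp add: algebra_simps)
    also have "\<dots> \<le> F x * (1 - F x)" using True F_mono F_nonneg by (simp add: mult_left_mono)
    finally show ?thesis .
  next
    case False
    then have "F (min x z) - F z * F x = F z * (1 - F x)" by (simp add: algebra_simps)
    also have "\<dots> \<le> F x * (1 - F x)" using False F_mono F_le_1 by (simp add: mult_right_mono)
    finally show ?thesis .
  qed
  also have "\<dots> \<le> (if x \<le> 0 then F x else 1 - F x)"
    using F_nonneg[of x] F_le_1[of x] by (simp add: mult_left_le mult_left_le_one_le)
  finally show ?thesis
    using divide_right_mono[OF _ less_imp_le[OF p_pos[of x]]] by (simp add: stein_sol_def tail_ratio_def)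
qed

lemma stein_sol_le: "stein_sol z x \<le> 1 / c1"
  using stein_sol_le_tail_ratio tail_ratio_le order.trans by blast

lemma abs_stein_sol_le: "\<bar>stein_sol z x\<bar> \<le> 1 / c1"
  using stein_sol_nonneg[of z x] stein_sol_le[of z x] by simp

lemma abs_stein_drift_le: "\<bar>stein_drift z x\<bar> \<le> 1"
proof -
  have "\<bar>stein_drift z x\<bar> = c0 * \<bar>g x\<bar> * stein_sol z x"
    using stein_sol_nonneg c0 by (simp add: stein_drift_def abs_mult)
  also have "\<dots> \<le> c0 * \<bar>g x\<bar> * tail_ratio x"
    using stein_sol_le_tail_ratio c0 by (simp add: mult_left_mono)
  also have "\<dots> \<le> 1" by (rule g_tail_ratio_le)
  finally show ?thesis .
qed

lemma stein_sol_cont: "continuous_on S (stein_sol z)"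
proof -
  have "continuous_on UNIV (\<lambda>x. F (min x z))"
    by (rule continuous_on_compose2[OF F_cont[of UNIV]]) (auto intro!: continuous_intros)
  then have "continuous_on UNIV (stein_sol z)"
    unfolding stein_sol_def[abs_def] using p_pos
    by (auto intro!: continuous_intros F_cont p_cont simp: less_imp_neq[symmetric])
  then show ?thesis using continuous_on_subset by blast
qed

lemma stein_sol_deriv:
  assumes "x \<noteq> z"
  shows "(stein_sol z has_real_derivative stein_drift z x + indicator {..z} x - F z) (at x)"
proof (cases "x < z")
  case True
  have "((\<lambda>y. (1 - F z) * F y / p y) has_real_derivative stein_drift z x + indicator {..z} x - F z) (at x)"
    using True p_pos[of x] by (auto intro!: derivative_eq_intros F_deriv p_deriv
        simp: field_simps power2_eq_square stein_drift_def stein_sol_def)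
  then show ?thesis
    by (rule has_field_derivative_transform_within_open[of _ _ _ "{..<z}"])
       (use True in \<open>auto simp: stein_sol_def algebra_simps\<close>)
next
  case False
  with assms have "z < x" by simp
  have "((\<lambda>y. F z * (1 - F y) / p y) has_real_derivative stein_drift z x + indicator {..z} x - F z) (at x)"
    using \<open>z < x\<close> p_pos[of x] by (auto intro!: derivative_eq_intros F_deriv p_deriv
        simp: field_simps power2_eq_square stein_drift_def stein_sol_def)
  then show ?thesis
    by (rule has_field_derivative_transform_within_open[of _ _ _ "{z<..}"])
       (use \<open>z < x\<close> in \<open>auto simp: stein_sol_def algebra_simps\<close>)
qed

lemma stein_sol_lipschitz: "\<bar>stein_sol z s - stein_sol z w\<bar> \<le> 2 * \<bar>s - w\<bar>"
proof -
  have *: "\<bar>stein_sol z b - stein_sol z a\<bar> \<le> 2 * (b - a)" if "a \<le> b" for a b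
  proof -
    have "(-2) * (b - a) \<le> stein_sol z b - stein_sol z a \<and> stein_sol z b - stein_sol z a \<le> 2 * (b - a)"
    proof (rule increment_bounds_of_derivative_bounds_except[OF that stein_sol_cont,
          where z=z and f'="\<lambda>s. stein_drift z s + indicator {..z} s - F z"])
      fix s assume "s \<noteq> z"
      then show "(stein_sol z has_real_derivative stein_drift z s + indicator {..z} s - F z) (at s)"
        by (rule stein_sol_deriv)
      show "- 2 \<le> stein_drift z s + indicator {..z} s - F z \<and> stein_drift z s + indicator {..z} s - F z \<le> 2"
        using abs_stein_drift_le[of z s] F_nonneg[of z] F_le_1[of z] by (auto simp: indicator_def abs_le_iff)
    qed
    then show ?thesis by auto
  qed
  show ?thesis
  proof (cases "w \<le> s")
    case True
    then show ?thesis using *[OF True] by simp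
  next
    case False
    then show ?thesis using *[of s w] by (simp add: abs_minus_commute)
  qed
qed

definition scale :: "real \<Rightarrow> real" where "scale x = max c1 (c0 * \<bar>g x\<bar>)"

lemma scale_pos: "scale x > 0" using c1_pos by (simp add: scale_def)

lemma scale_cont: "continuous_on S scale"
  unfolding scale_def[abs_def] by (auto intro!: continuous_intros g_cont)

lemma stein_sol_scale_le: "stein_sol z x * scale x \<le> 1"
proof -
  have "c1 * stein_sol z x \<le> 1" using stein_sol_le[of z x] c1_pos by (simp add: field_simps)
  moreover have "c0 * \<bar>g x\<bar> * stein_sol z x \<le> 1"
    using abs_stein_drift_le[of z x] stein_sol_nonneg[of z x] c0 by (simp add: stein_drift_def abs_mult)
  ultimately show ?thesis by (simp add: scale_def max_def mult.commute)
qed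

lemma min_inv_eq: "min_inv c0 c1 g x = 1 / scale x"
proof (cases "g x = 0")
  case False
  have pos: "c0 * \<bar>g x\<bar> > 0" using False c0 by simp
  have ab: "\<bar>c0 * g x\<bar> = c0 * \<bar>g x\<bar>" using c0 by (simp add: abs_mult)
  show ?thesis
  proof (cases "c1 \<le> c0 * \<bar>g x\<bar>")
    case True
    have "1 / (c0 * \<bar>g x\<bar>) \<le> 1 / c1" by (rule divide_left_mono) (use True c1_pos pos in auto)
    then show ?thesis using True False by (simp add: min_inv_def scale_def ab min_def max_def)
  next
    case le: False
    have "1 / c1 \<le> 1 / (c0 * \<bar>g x\<bar>)" by (rule divide_left_mono) (use le c1_pos pos in auto)
    then show ?thesis using le False by (simp add: min_inv_def scale_def ab min_def max_def)
  qed
qed (use c1_pos in \<open>simp add: min_inv_def scale_def\<close>)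

context
  fixes c3 :: real
  assumes H3: "\<And>x. min_inv c0 c1 g x * (\<bar>x\<bar> + 3 / c1) * (c0 * \<bar>deriv g x\<bar>) \<le> c3"
begin

text \<open>Only the summand \<open>3 / c1\<close> of the weight \<open>\<bar>x\<bar> + 3 / c1\<close> in (H3) is needed.\<close>
lemma deriv_g_le_scale: "c0 * \<bar>deriv g x\<bar> \<le> c1 * c3 * scale x / 3"
proof -
  have "(1 / scale x) * (3 / c1) * (c0 * \<bar>deriv g x\<bar>) \<le> (1 / scale x) * (\<bar>x\<bar> + 3 / c1) * (c0 * \<bar>deriv g x\<bar>)"
    using scale_pos[of x] c0 by (intro mult_right_mono mult_left_mono) auto
  also have "\<dots> \<le> c3" using H3[of x] by (simp add: min_inv_eq)
  finally show ?thesis using scale_pos[of x] c1_pos by (simp add: field_simps)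
qed

lemma c3_nonneg: "c3 \<ge> 0"
proof -
  have "0 \<le> c0 * \<bar>deriv g 0\<bar>" using c0 by simp
  also have "\<dots> \<le> c1 * c3 * scale 0 / 3" by (rule deriv_g_le_scale)
  finally have "0 \<le> (c1 * scale 0) * c3" by (simp add: mult_ac)
  moreover have "c1 * scale 0 > 0" using c1_pos scale_pos[of 0] by simp
  ultimately show ?thesis by (simp add: zero_le_mult_iff)
qed

context
  fixes \<delta> :: real
  assumes small: "c1 * c3 * \<delta> \<le> 1"
begin

text \<open>Since \<open>|c0 g'| \<le> c1 c3 scale / 3\<close> and \<open>c1 c3 \<delta> \<le> 1\<close>, on a segment of length \<open>\<delta>\<close> the
  maximum \<open>m\<close> of \<open>scale\<close> satisfies \<open>scale m \<le> scale s + scale m / 3\<close>.\<close>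
lemma scale_le_on_segment:
  assumes sw: "\<bar>s - w\<bar> \<le> \<delta>" and y: "min s w \<le> y" "y \<le> max s w"
  shows "scale y \<le> 3 / 2 * scale s"
proof -
  define I where "I = {min s w .. max s w}"
  have "compact I" "I \<noteq> {}" unfolding I_def by auto
  then obtain m where m: "m \<in> I" and mmax: "\<And>y. y \<in> I \<Longrightarrow> scale y \<le> scale m"
    using continuous_attains_sup[OF \<open>compact I\<close> \<open>I \<noteq> {}\<close> scale_cont] by blast
  obtain \<xi> where \<xi>: "min s m \<le> \<xi>" "\<xi> \<le> max s m" and eq: "g m - g s = (m - s) * deriv g \<xi>"
    using MVT_deriv_between[OF g_diff] by blast
  have \<xi>I: "\<xi> \<in> I" using \<xi> m by (auto simp: I_def)
  have ms: "\<bar>m - s\<bar> \<le> \<delta>" using m sw by (auto simp: I_def)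
  have "c0 * \<bar>g m - g s\<bar> = \<bar>m - s\<bar> * (c0 * \<bar>deriv g \<xi>\<bar>)" using c0 by (simp add: eq abs_mult)
  also have "\<dots> \<le> \<delta> * (c1 * c3 * scale \<xi> / 3)"
    using ms deriv_g_le_scale[of \<xi>] c0 by (intro mult_mono) auto
  also have "\<dots> \<le> \<delta> * (c1 * c3 * scale m / 3)"
    using mmax[OF \<xi>I] c1_pos c3_nonneg ms
    by (intro mult_left_mono divide_right_mono) auto
  also have "\<dots> = (c1 * c3 * \<delta>) * scale m / 3" by simp
  also have "\<dots> \<le> scale m / 3"
    using small scale_pos[of m] by (intro divide_right_mono) (auto intro: mult_left_le_one_le)
  finally have "c0 * \<bar>g m - g s\<bar> \<le> scale m / 3" .
  moreover have "c0 * \<bar>g m\<bar> \<le> c0 * \<bar>g s\<bar> + c0 * \<bar>g m - g s\<bar>"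
    using c0 by (simp add: distrib_left[symmetric] abs_triangle_ineq2_sym mult_left_mono)
  moreover have "c0 * \<bar>g s\<bar> \<le> scale s" "c1 \<le> scale s" by (simp_all add: scale_def)
  ultimately have "max c1 (c0 * \<bar>g m\<bar>) \<le> scale s + scale m / 3"
    using scale_pos[of m] by simp
  then have "scale m \<le> scale s + scale m / 3" by (simp only: scale_def[of m])
  moreover have "scale y \<le> scale m" using mmax y by (simp add: I_def)
  ultimately show ?thesis by linarith
qed

lemma stein_drift_lipschitz:
  assumes sw: "\<bar>s - w\<bar> \<le> \<delta>"
  shows "\<bar>stein_drift z s - stein_drift z w\<bar> \<le> \<bar>s - w\<bar> * (c1 * c3 / 2 + 2 * (c0 * \<bar>g w\<bar>))"
proof -
  obtain \<xi> where \<xi>: "min w s \<le> \<xi>" "\<xi> \<le> max w s" and eq: "g s - g w = (s - w) * deriv g \<xi>"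
    using MVT_deriv_between[OF g_diff] by blast
  have "c0 * \<bar>g s - g w\<bar> = \<bar>s - w\<bar> * (c0 * \<bar>deriv g \<xi>\<bar>)" using c0 by (simp add: eq abs_mult)
  also have "\<dots> \<le> \<bar>s - w\<bar> * (c1 * c3 * scale \<xi> / 3)"
    using deriv_g_le_scale[of \<xi>] by (intro mult_left_mono) auto
  also have "\<dots> \<le> \<bar>s - w\<bar> * (c1 * c3 * (3 / 2 * scale s) / 3)"
    using scale_le_on_segment[OF sw] \<xi> c1_pos c3_nonneg
    by (intro mult_left_mono divide_right_mono) (auto simp: min.commute max.commute)
  finally have "c0 * \<bar>g s - g w\<bar> \<le> \<bar>s - w\<bar> * (c1 * c3 / 2) * scale s" by (simp add: field_simps)
  then have "c0 * \<bar>g s - g w\<bar> * stein_sol z s \<le> \<bar>s - w\<bar> * (c1 * c3 / 2) * (stein_sol z s * scale s)"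
    using stein_sol_nonneg[of z s] by (metis mult_right_mono mult.assoc mult.commute)
  also have "\<dots> \<le> \<bar>s - w\<bar> * (c1 * c3 / 2)"
    using stein_sol_scale_le[of z s] c1_pos c3_nonneg by (intro mult_left_le) auto
  finally have T1: "\<bar>c0 * (g s - g w) * stein_sol z s\<bar> \<le> \<bar>s - w\<bar> * (c1 * c3 / 2)"
    using c0 stein_sol_nonneg[of z s] by (simp add: abs_mult)
  have "\<bar>c0 * g w * (stein_sol z s - stein_sol z w)\<bar> = c0 * \<bar>g w\<bar> * \<bar>stein_sol z s - stein_sol z w\<bar>"
    using c0 by (simp add: abs_mult)
  also have "\<dots> \<le> c0 * \<bar>g w\<bar> * (2 * \<bar>s - w\<bar>)"
    using stein_sol_lipschitz c0 by (intro mult_left_mono) auto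
  finally have T2: "\<bar>c0 * g w * (stein_sol z s - stein_sol z w)\<bar> \<le> \<bar>s - w\<bar> * (2 * (c0 * \<bar>g w\<bar>))"
    by (simp add: mult_ac)
  have "stein_drift z s - stein_drift z w
      = c0 * (g s - g w) * stein_sol z s + c0 * g w * (stein_sol z s - stein_sol z w)"
    by (simp add: stein_drift_def algebra_simps)
  then have "\<bar>stein_drift z s - stein_drift z w\<bar>
      \<le> \<bar>c0 * (g s - g w) * stein_sol z s\<bar> + \<bar>c0 * g w * (stein_sol z s - stein_sol z w)\<bar>"
    by (simp add: abs_triangle_ineq)
  also have "\<dots> \<le> \<bar>s - w\<bar> * (c1 * c3 / 2) + \<bar>s - w\<bar> * (2 * (c0 * \<bar>g w\<bar>))"
    using T1 T2 by (rule add_mono)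
  finally show ?thesis by (simp add: distrib_left)
qed

lemma stein_sol_deriv_near_bounds:
  assumes sw: "\<bar>s - w\<bar> \<le> \<delta>"
  shows "stein_drift z w - \<delta> * (c1 * c3 / 2 + 2 * (c0 * \<bar>g w\<bar>)) + indicator {..z} (w + \<delta>)
           \<le> stein_drift z s + indicator {..z} s"
    and "stein_drift z s + indicator {..z} s
           \<le> stein_drift z w + \<delta> * (c1 * c3 / 2 + 2 * (c0 * \<bar>g w\<bar>)) + indicator {..z} (w - \<delta>)"
proof -
  have "0 \<le> c1 * c3 / 2 + 2 * (c0 * \<bar>g w\<bar>)" using c1_pos c3_nonneg c0 by simp
  with sw have "\<bar>s - w\<bar> * (c1 * c3 / 2 + 2 * (c0 * \<bar>g w\<bar>)) \<le> \<delta> * (c1 * c3 / 2 + 2 * (c0 * \<bar>g w\<bar>))"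
    by (rule mult_right_mono)
  then have "\<bar>stein_drift z s - stein_drift z w\<bar> \<le> \<delta> * (c1 * c3 / 2 + 2 * (c0 * \<bar>g w\<bar>))"
    using stein_drift_lipschitz[OF sw, of z] by linarith
  moreover have "indicator {..z} (w + \<delta>) \<le> (indicator {..z} s :: real)"
    "(indicator {..z} s :: real) \<le> indicator {..z} (w - \<delta>)"
    using sw by (auto simp: indicator_def)
  ultimately show "stein_drift z w - \<delta> * (c1 * c3 / 2 + 2 * (c0 * \<bar>g w\<bar>)) + indicator {..z} (w + \<delta>)
      \<le> stein_drift z s + indicator {..z} s"
    and "stein_drift z s + indicator {..z} s
      \<le> stein_drift z w + \<delta> * (c1 * c3 / 2 + 2 * (c0 * \<bar>g w\<bar>)) + indicator {..z} (w - \<delta>)"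
    by (auto simp: abs_le_iff)
qed

text \<open>Shifting the step function by \<open>s \<delta>\<close> makes it a one-sided bound for \<open>1{\<cdot> \<le> z}\<close> along
  the whole step from \<open>w\<close> to \<open>w'\<close>; \<open>s = 1\<close> gives the lower and \<open>s = -1\<close> the upper estimate.\<close>
lemma stein_sol_increment_bound:
  assumes ww: "\<bar>w - w'\<bar> \<le> \<delta>" and s: "s = 1 \<or> s = -1"
  shows "s * ((w - w')\<^sup>2 * (stein_drift z w + indicator {..z} (w + s * \<delta>) - F z))
           - \<delta> * (w - w')\<^sup>2 * (c1 * c3 / 2 + 2 * (c0 * \<bar>g w\<bar>))
         \<le> s * ((w - w') * (stein_sol z w - stein_sol z w'))"
proof -
  define L where "L = c1 * c3 / 2 + 2 * (c0 * \<bar>g w\<bar>)"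
  define lo where "lo = stein_drift z w - \<delta> * L + indicator {..z} (w + \<delta>) - F z"
  define hi where "hi = stein_drift z w + \<delta> * L + indicator {..z} (w - \<delta>) - F z"
  define a where "a = min w w'"
  define b where "b = max w w'"
  have ab: "a \<le> b" by (simp add: a_def b_def)
  have mv: "lo * (b - a) \<le> stein_sol z b - stein_sol z a \<and> stein_sol z b - stein_sol z a \<le> hi * (b - a)"
  proof (rule increment_bounds_of_derivative_bounds_except[OF ab stein_sol_cont,
        where z=z and f'="\<lambda>s. stein_drift z s + indicator {..z} s - F z"])
    fix s assume "s \<noteq> z"
    then show "(stein_sol z has_real_derivative stein_drift z s + indicator {..z} s - F z) (at s)"
      by (rule stein_sol_deriv)
  next
    fix s assume "a < s" "s < b"
    then have "\<bar>s - w\<bar> \<le> \<delta>" using ww by (auto simp: a_def b_def)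
    from stein_sol_deriv_near_bounds[OF this, of z]
    show "lo \<le> stein_drift z s + indicator {..z} s - F z \<and> stein_drift z s + indicator {..z} s - F z \<le> hi"
      by (simp add: lo_def hi_def L_def)
  qed
  have prod: "(w - w') * (stein_sol z w - stein_sol z w') = (b - a) * (stein_sol z b - stein_sol z a)"
    by (cases "w' \<le> w") (auto simp: a_def b_def algebra_simps)
  have sq: "(w - w')\<^sup>2 = (b - a) * (b - a)"
    by (cases "w' \<le> w") (auto simp: a_def b_def power2_eq_square algebra_simps)
  have "(b - a) * (lo * (b - a)) \<le> (b - a) * (stein_sol z b - stein_sol z a)"
    "(b - a) * (stein_sol z b - stein_sol z a) \<le> (b - a) * (hi * (b - a))"
    using mv ab by (simp_all add: mult_left_mono)
  with s show ?thesis
    unfolding prod sq L_def[symmetric] by (auto simp: lo_def hi_def algebra_simps)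
qed

end

end

definition kolmogorov_bound ::
    "'a measure \<Rightarrow> ('a \<Rightarrow> real) \<Rightarrow> ('a \<Rightarrow> real) \<Rightarrow> (real \<Rightarrow> real) \<Rightarrow> real \<Rightarrow> real \<Rightarrow> ennreal" where
  "kolmogorov_bound M W W' r c3 \<delta> =
     3 * (\<integral>\<^sup>+ \<omega>. ennreal \<bar>1 - (c0 / 2) *
            real_cond_exp M (vimage_algebra (space M) W borel) (\<lambda>\<omega>. (W \<omega> - W' \<omega>)\<^sup>2) \<omega>\<bar> \<partial>M)
     + ennreal (c1 * max 1 c3 * \<delta>)
     + ennreal (2 * c0 / c1) * (\<integral>\<^sup>+ \<omega>. ennreal \<bar>r (W \<omega>)\<bar> \<partial>M)
     + ennreal (\<delta> ^ 3 * c0) * (ennreal (2 + c3 / 2) * (\<integral>\<^sup>+ \<omega>. ennreal \<bar>c0 * g (W \<omega>)\<bar> \<partial>M)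
                                 + ennreal (c1 * c3 / 2))"

text \<open>The bound is trivial when \<open>c1 max 1 c3 \<delta> \<ge> 1\<close> (the left-hand side is at most \<open>1\<close>)
  or when \<open>r W\<close> is not integrable (the right-hand side is infinite).\<close>
lemma cdf_distance_le_kolmogorov_bound_degenerate:
  assumes M: "prob_space M" and [measurable]: "W \<in> borel_measurable M" "r \<in> borel_measurable borel"
    and degenerate: "1 \<le> c1 * max 1 c3 * \<delta> \<or> \<not> integrable M (\<lambda>\<omega>. r (W \<omega>))"
  shows "ennreal \<bar>measure M {\<omega> \<in> space M. W \<omega> \<le> z} - F z\<bar> \<le> kolmogorov_bound M W W' r c3 \<delta>"
  using degenerate
proof
  assume large: "1 \<le> c1 * max 1 c3 * \<delta>"
  have "\<bar>measure M {\<omega> \<in> space M. W \<omega> \<le> z} - F z\<bar> \<le> 1"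
    using prob_space.prob_le_1[OF M, of "{\<omega> \<in> space M. W \<omega> \<le> z}"]
      measure_nonneg[of M "{\<omega> \<in> space M. W \<omega> \<le> z}"] F_nonneg[of z] F_le_1[of z]
    by (intro abs_leI) linarith+
  then have "ennreal \<bar>measure M {\<omega> \<in> space M. W \<omega> \<le> z} - F z\<bar> \<le> ennreal (c1 * max 1 c3 * \<delta>)"
    using large by (intro ennreal_leI) simp
  then show ?thesis
    unfolding kolmogorov_bound_def by (auto intro: order_trans add_increasing add_increasing2)
next
  assume "\<not> integrable M (\<lambda>\<omega>. r (W \<omega>))"
  then have "(\<integral>\<^sup>+ \<omega>. ennreal \<bar>r (W \<omega>)\<bar> \<partial>M) = \<top>"
    by (simp add: integrable_iff_bounded less_top[symmetric])
  then show ?thesis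
    using c0 c1_pos by (simp add: kolmogorov_bound_def ennreal_mult_eq_top_iff)
qed

end

section \<open>The exchangeable pair\<close>

locale exchangeable_stein_pair = potential_density g c0 c1 N Y for g c0 c1 and N :: "'b measure" and Y +
  fixes M :: "'a measure" and W W' :: "'a \<Rightarrow> real" and r :: "real \<Rightarrow> real" and c3 \<delta> :: real
  assumes M: "prob_space M"
    and W [measurable]: "W \<in> borel_measurable M" and W' [measurable]: "W' \<in> borel_measurable M"
    and exch: "exchangeable M W W'"
    and r_meas [measurable]: "r \<in> borel_measurable borel"
    and cond: "AE \<omega> in M. real_cond_exp M (vimage_algebra (space M) W borel) (\<lambda>\<omega>. W \<omega> - W' \<omega>) \<omega>
                  = g (W \<omega>) + r (W \<omega>)"
    and H3: "\<And>x. min_inv c0 c1 g x * (\<bar>x\<bar> + 3 / c1) * (c0 * \<bar>deriv g x\<bar>) \<le> c3"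
    and bdd: "AE \<omega> in M. \<bar>W \<omega> - W' \<omega>\<bar> \<le> \<delta>"
    and small: "c1 * c3 * \<delta> \<le> 1"
    and r_W_integrable: "integrable M (\<lambda>\<omega>. r (W \<omega>))"
begin

interpretation M: prob_space M by (rule M)

abbreviation sigma_W :: "'a measure" where "sigma_W \<equiv> vimage_algebra (space M) W borel"

abbreviation cond_sq_diff :: "'a \<Rightarrow> real" where
  "cond_sq_diff \<equiv> real_cond_exp M sigma_W (\<lambda>\<omega>. (W \<omega> - W' \<omega>)\<^sup>2)"

abbreviation var_defect :: "'a \<Rightarrow> real" where
  "var_defect \<omega> \<equiv> 1 - (c0 / 2) * cond_sq_diff \<omega>"

lemma subalgebra_sigma_W: "subalgebra M sigma_W"
proof -
  have "sets sigma_W = {W -` A \<inter> space M | A. A \<in> sets borel}"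
    by (rule sets_vimage_algebra2) simp
  also have "\<dots> \<subseteq> sets M" using W by (auto simp: measurable_def)
  finally show ?thesis by (simp add: subalgebra_def)
qed

interpretation sigma_W: finite_measure_subalgebra M sigma_W
  by unfold_locales (rule subalgebra_sigma_W)

lemma measurable_sigma_W: "\<phi> \<in> borel_measurable borel \<Longrightarrow> (\<lambda>\<omega>. \<phi> (W \<omega>)) \<in> borel_measurable sigma_W"
  using measurable_vimage_algebra1[of W "space M" borel] by (rule measurable_compose) simp

lemma delta_nonneg: "0 \<le> \<delta>"
proof -
  have "AE \<omega> in M. 0 \<le> \<delta>" using bdd by eventually_elim auto
  then show ?thesis by simp
qed

lemma integrable_diff: "integrable M (\<lambda>\<omega>. W \<omega> - W' \<omega>)"
  by (rule M.integrable_const_bound[where B=\<delta>]) (use bdd in auto)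

lemma integrable_sq_diff: "integrable M (\<lambda>\<omega>. (W \<omega> - W' \<omega>)\<^sup>2)"
proof (rule M.integrable_const_bound[where B="\<delta>\<^sup>2"])
  show "AE x in M. norm ((W x - W' x)\<^sup>2) \<le> \<delta>\<^sup>2"
    using bdd by eventually_elim (auto simp: abs_le_square_iff[symmetric] intro: power_mono)
qed simp

lemma integrable_var_defect: "integrable M var_defect"
  using sigma_W.real_cond_exp_int(1)[OF integrable_sq_diff] by simp

lemma integrable_g_W: "integrable M (\<lambda>\<omega>. g (W \<omega>))"
proof -
  have i: "integrable M (\<lambda>\<omega>. real_cond_exp M sigma_W (\<lambda>\<omega>. W \<omega> - W' \<omega>) \<omega> - r (W \<omega>))"
    using sigma_W.real_cond_exp_int(1)[OF integrable_diff] r_W_integrable by simp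
  then have "(\<lambda>\<omega>. real_cond_exp M sigma_W (\<lambda>\<omega>. W \<omega> - W' \<omega>) \<omega> - r (W \<omega>)) \<in> borel_measurable M"
    by (rule borel_measurable_integrable)
  moreover have "AE \<omega> in M. real_cond_exp M sigma_W (\<lambda>\<omega>. W \<omega> - W' \<omega>) \<omega> - r (W \<omega>) = g (W \<omega>)"
    using cond by eventually_elim simp
  ultimately show ?thesis
    using i integrable_cong_AE[of "\<lambda>\<omega>. real_cond_exp M sigma_W (\<lambda>\<omega>. W \<omega> - W' \<omega>) \<omega> - r (W \<omega>)" M
        "\<lambda>\<omega>. g (W \<omega>)"]
    by simp
qed

lemma integral_test_mult_diff:
  assumes [measurable]: "\<phi> \<in> borel_measurable borel" and bd: "\<And>x. \<bar>\<phi> x\<bar> \<le> B"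
  shows "(\<integral>\<omega>. \<phi> (W \<omega>) * (W \<omega> - W' \<omega>) \<partial>M) = (\<integral>\<omega>. \<phi> (W \<omega>) * (g (W \<omega>) + r (W \<omega>)) \<partial>M)"
proof -
  have "integrable M (\<lambda>\<omega>. \<phi> (W \<omega>) * (W \<omega> - W' \<omega>))"
    by (rule integrable_bounded_mult[OF integrable_diff]) (use bd in auto)
  then have "(\<integral>\<omega>. \<phi> (W \<omega>) * (W \<omega> - W' \<omega>) \<partial>M)
      = (\<integral>\<omega>. \<phi> (W \<omega>) * real_cond_exp M sigma_W (\<lambda>\<omega>. W \<omega> - W' \<omega>) \<omega> \<partial>M)"
    by (rule sigma_W.real_cond_exp_intg(2)[symmetric, OF _ measurable_sigma_W]) measurable
  also have "\<dots> = (\<integral>\<omega>. \<phi> (W \<omega>) * (g (W \<omega>) + r (W \<omega>)) \<partial>M)"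
    by (rule integral_cong_AE) (use cond in auto)
  finally show ?thesis .
qed

lemma integral_test_mult_sq_diff:
  assumes [measurable]: "\<phi> \<in> borel_measurable borel" and bd: "\<And>x. \<bar>\<phi> x\<bar> \<le> B"
  shows "(\<integral>\<omega>. \<phi> (W \<omega>) * (W \<omega> - W' \<omega>)\<^sup>2 \<partial>M) = (\<integral>\<omega>. \<phi> (W \<omega>) * cond_sq_diff \<omega> \<partial>M)"
proof -
  have "integrable M (\<lambda>\<omega>. \<phi> (W \<omega>) * (W \<omega> - W' \<omega>)\<^sup>2)"
    by (rule integrable_bounded_mult[OF integrable_sq_diff]) (use bd in auto)
  then show ?thesis
    by (rule sigma_W.real_cond_exp_intg(2)[symmetric, OF _ measurable_sigma_W]) measurable
qed

lemma integral_test_eq_var_defect: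
  assumes [measurable]: "\<phi> \<in> borel_measurable borel" and bd: "\<And>x. \<bar>\<phi> x\<bar> \<le> B"
  shows "(\<integral>\<omega>. \<phi> (W \<omega>) \<partial>M)
      = (\<integral>\<omega>. \<phi> (W \<omega>) * var_defect \<omega> \<partial>M) + (c0 / 2) * (\<integral>\<omega>. \<phi> (W \<omega>) * (W \<omega> - W' \<omega>)\<^sup>2 \<partial>M)"
    and "\<bar>\<integral>\<omega>. \<phi> (W \<omega>) * var_defect \<omega> \<partial>M\<bar> \<le> B * (\<integral>\<omega>. \<bar>var_defect \<omega>\<bar> \<partial>M)"
proof -
  have iV: "integrable M (\<lambda>\<omega>. \<phi> (W \<omega>) * var_defect \<omega>)"
    by (rule integrable_bounded_mult[OF integrable_var_defect]) (use bd in auto)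
  have iC: "integrable M (\<lambda>\<omega>. \<phi> (W \<omega>) * cond_sq_diff \<omega>)"
    by (rule integrable_bounded_mult[OF sigma_W.real_cond_exp_int(1)[OF integrable_sq_diff]])
       (use bd in auto)
  have "(\<integral>\<omega>. \<phi> (W \<omega>) \<partial>M) = (\<integral>\<omega>. \<phi> (W \<omega>) * var_defect \<omega> + (c0 / 2) * (\<phi> (W \<omega>) * cond_sq_diff \<omega>) \<partial>M)"
    by (simp add: algebra_simps)
  also have "\<dots> = (\<integral>\<omega>. \<phi> (W \<omega>) * var_defect \<omega> \<partial>M) + (c0 / 2) * (\<integral>\<omega>. \<phi> (W \<omega>) * cond_sq_diff \<omega> \<partial>M)"
    using iV iC by simp
  finally show "(\<integral>\<omega>. \<phi> (W \<omega>) \<partial>M)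
      = (\<integral>\<omega>. \<phi> (W \<omega>) * var_defect \<omega> \<partial>M) + (c0 / 2) * (\<integral>\<omega>. \<phi> (W \<omega>) * (W \<omega> - W' \<omega>)\<^sup>2 \<partial>M)"
    by (simp add: integral_test_mult_sq_diff[OF assms(1) bd])
  have "\<bar>\<integral>\<omega>. \<phi> (W \<omega>) * var_defect \<omega> \<partial>M\<bar> \<le> (\<integral>\<omega>. \<bar>\<phi> (W \<omega>) * var_defect \<omega>\<bar> \<partial>M)"
    by (rule integral_abs_bound)
  also have "\<dots> \<le> (\<integral>\<omega>. B * \<bar>var_defect \<omega>\<bar> \<partial>M)"
  proof (rule integral_mono)
    fix \<omega> show "\<bar>\<phi> (W \<omega>) * var_defect \<omega>\<bar> \<le> B * \<bar>var_defect \<omega>\<bar>"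
      using bd[of "W \<omega>"] by (simp add: abs_mult mult_right_mono)
  qed (use iV integrable_var_defect in simp_all)
  finally show "\<bar>\<integral>\<omega>. \<phi> (W \<omega>) * var_defect \<omega> \<partial>M\<bar> \<le> B * (\<integral>\<omega>. \<bar>var_defect \<omega>\<bar> \<partial>M)"
    by simp
qed

lemma stein_sol_measurable [measurable]: "stein_sol z \<in> borel_measurable borel"
  using stein_sol_cont by (rule borel_measurable_continuous_onI)

lemma stein_drift_measurable [measurable]: "stein_drift z \<in> borel_measurable borel"
  unfolding stein_drift_def[abs_def] by measurable

lemma integrable_diff_mult_stein_sol:
  assumes [measurable]: "V \<in> borel_measurable M"
  shows "integrable M (\<lambda>\<omega>. (W \<omega> - W' \<omega>) * stein_sol z (V \<omega>))"
proof -
  have "integrable M (\<lambda>\<omega>. stein_sol z (V \<omega>) * (W \<omega> - W' \<omega>))"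
    by (rule integrable_bounded_mult[OF integrable_diff]) (use abs_stein_sol_le in auto)
  then show ?thesis by (simp add: mult.commute)
qed

text \<open>Exchangeability turns \<open>E[\<Delta> (f W - f W')]\<close> into \<open>2 E[\<Delta> f W]\<close>, and the regression
  hypothesis replaces \<open>\<Delta>\<close> by \<open>g W + r W\<close>.\<close>
lemma stein_identity:
  "(c0 / 2) * (\<integral>\<omega>. (W \<omega> - W' \<omega>) * (stein_sol z (W \<omega>) - stein_sol z (W' \<omega>)) \<partial>M)
     = (\<integral>\<omega>. stein_drift z (W \<omega>) \<partial>M) + c0 * (\<integral>\<omega>. stein_sol z (W \<omega>) * r (W \<omega>) \<partial>M)"
proof -
  have ig: "integrable M (\<lambda>\<omega>. stein_sol z (W \<omega>) * g (W \<omega>))"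
    by (rule integrable_bounded_mult[OF integrable_g_W]) (use abs_stein_sol_le in auto)
  have ir: "integrable M (\<lambda>\<omega>. stein_sol z (W \<omega>) * r (W \<omega>))"
    by (rule integrable_bounded_mult[OF r_W_integrable]) (use abs_stein_sol_le in auto)
  have "(\<integral>\<omega>. (W \<omega> - W' \<omega>) * (stein_sol z (W \<omega>) - stein_sol z (W' \<omega>)) \<partial>M)
      = (\<integral>\<omega>. (W \<omega> - W' \<omega>) * stein_sol z (W \<omega>) \<partial>M) - (\<integral>\<omega>. (W \<omega> - W' \<omega>) * stein_sol z (W' \<omega>) \<partial>M)"
    using integrable_diff_mult_stein_sol[OF W] integrable_diff_mult_stein_sol[OF W']
    by (simp add: right_diff_distrib)
  also have "(\<integral>\<omega>. (W \<omega> - W' \<omega>) * stein_sol z (W' \<omega>) \<partial>M) = - (\<integral>\<omega>. (W \<omega> - W' \<omega>) * stein_sol z (W \<omega>) \<partial>M)"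
    by (rule exchangeable_integral_antisym[OF exch W W' stein_sol_measurable abs_stein_sol_le integrable_diff])
  also have "(\<integral>\<omega>. (W \<omega> - W' \<omega>) * stein_sol z (W \<omega>) \<partial>M)
      = (\<integral>\<omega>. stein_sol z (W \<omega>) * (g (W \<omega>) + r (W \<omega>)) \<partial>M)"
    using integral_test_mult_diff[OF stein_sol_measurable abs_stein_sol_le] by (simp add: mult.commute)
  also have "\<dots> = (\<integral>\<omega>. stein_sol z (W \<omega>) * g (W \<omega>) \<partial>M) + (\<integral>\<omega>. stein_sol z (W \<omega>) * r (W \<omega>) \<partial>M)"
    using ig ir by (simp add: distrib_left)
  finally show ?thesis
    by (simp add: stein_drift_def mult_ac algebra_simps)
qed

lemma remainder_bound:
  "\<bar>c0 * (\<integral>\<omega>. stein_sol z (W \<omega>) * r (W \<omega>) \<partial>M)\<bar> \<le> c0 / c1 * (\<integral>\<omega>. \<bar>r (W \<omega>)\<bar> \<partial>M)"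
proof -
  have "\<bar>\<integral>\<omega>. stein_sol z (W \<omega>) * r (W \<omega>) \<partial>M\<bar> \<le> (\<integral>\<omega>. \<bar>stein_sol z (W \<omega>) * r (W \<omega>)\<bar> \<partial>M)"
    by (rule integral_abs_bound)
  also have "\<dots> \<le> (\<integral>\<omega>. 1 / c1 * \<bar>r (W \<omega>)\<bar> \<partial>M)"
  proof (rule integral_mono)
    have "integrable M (\<lambda>\<omega>. stein_sol z (W \<omega>) * r (W \<omega>))"
      by (rule integrable_bounded_mult[OF r_W_integrable]) (use abs_stein_sol_le in auto)
    then show "integrable M (\<lambda>\<omega>. \<bar>stein_sol z (W \<omega>) * r (W \<omega>)\<bar>)" by simp
    fix \<omega> show "\<bar>stein_sol z (W \<omega>) * r (W \<omega>)\<bar> \<le> 1 / c1 * \<bar>r (W \<omega>)\<bar>"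
      using mult_right_mono[OF abs_stein_sol_le abs_ge_zero] by (simp add: abs_mult)
  qed (use r_W_integrable in simp)
  finally have "c0 * \<bar>\<integral>\<omega>. stein_sol z (W \<omega>) * r (W \<omega>) \<partial>M\<bar> \<le> c0 * (1 / c1 * (\<integral>\<omega>. \<bar>r (W \<omega>)\<bar> \<partial>M))"
    using c0 by (intro mult_left_mono) auto
  then show ?thesis using c0 by (simp add: abs_mult)
qed

lemma delta_sq_diff_le: "AE \<omega> in M. \<bar>\<delta> * (W \<omega> - W' \<omega>)\<^sup>2\<bar> \<le> \<delta> ^ 3"
  using bdd
proof eventually_elim
  case (elim \<omega>)
  then have "(W \<omega> - W' \<omega>)\<^sup>2 \<le> \<delta>\<^sup>2" by (simp add: abs_le_square_iff[symmetric] power_mono)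
  then have "\<delta> * (W \<omega> - W' \<omega>)\<^sup>2 \<le> \<delta> * \<delta>\<^sup>2" using delta_nonneg by (rule mult_left_mono)
  then show ?case
    using delta_nonneg by (simp add: abs_mult abs_of_nonneg power3_eq_cube power2_eq_square mult.assoc)
qed

lemma integrable_drift_error:
  "integrable M (\<lambda>\<omega>. \<delta> * (W \<omega> - W' \<omega>)\<^sup>2 * (c1 * c3 / 2 + 2 * (c0 * \<bar>g (W \<omega>)\<bar>)))"
  by (rule integrable_bounded_mult[OF _ _ delta_sq_diff_le]) (use integrable_g_W in simp_all)

lemma drift_error_bound:
  "(\<integral>\<omega>. \<delta> * (W \<omega> - W' \<omega>)\<^sup>2 * (c1 * c3 / 2 + 2 * (c0 * \<bar>g (W \<omega>)\<bar>)) \<partial>M)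
     \<le> \<delta> ^ 3 * (c1 * c3 / 2 + 2 * (\<integral>\<omega>. c0 * \<bar>g (W \<omega>)\<bar> \<partial>M))"
proof -
  have L_nonneg: "0 \<le> c1 * c3 / 2 + 2 * (c0 * \<bar>g x\<bar>)" for x
    using c1_pos c3_nonneg[OF H3] c0 by simp
  have "(\<integral>\<omega>. \<delta> * (W \<omega> - W' \<omega>)\<^sup>2 * (c1 * c3 / 2 + 2 * (c0 * \<bar>g (W \<omega>)\<bar>)) \<partial>M)
      \<le> (\<integral>\<omega>. \<delta> ^ 3 * (c1 * c3 / 2 + 2 * (c0 * \<bar>g (W \<omega>)\<bar>)) \<partial>M)"
  proof (rule integral_mono_AE[OF integrable_drift_error])
    show "AE \<omega> in M. \<delta> * (W \<omega> - W' \<omega>)\<^sup>2 * (c1 * c3 / 2 + 2 * (c0 * \<bar>g (W \<omega>)\<bar>))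
        \<le> \<delta> ^ 3 * (c1 * c3 / 2 + 2 * (c0 * \<bar>g (W \<omega>)\<bar>))"
      using delta_sq_diff_le by eventually_elim (rule mult_right_mono[OF _ L_nonneg], simp)
  qed (use integrable_g_W in simp)
  also have "\<dots> = \<delta> ^ 3 * (c1 * c3 / 2 + 2 * (\<integral>\<omega>. c0 * \<bar>g (W \<omega>)\<bar> \<partial>M))"
    using integrable_g_W by (simp add: M.prob_space)
  finally show ?thesis .
qed

lemma integrated_increment_bound:
  assumes s: "s = 1 \<or> s = -1"
  shows "s * (\<integral>\<omega>. (stein_drift z (W \<omega>) + indicator {..z} (W \<omega> + s * \<delta>) - F z) * (W \<omega> - W' \<omega>)\<^sup>2 \<partial>M)
      - (\<integral>\<omega>. \<delta> * (W \<omega> - W' \<omega>)\<^sup>2 * (c1 * c3 / 2 + 2 * (c0 * \<bar>g (W \<omega>)\<bar>)) \<partial>M)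
    \<le> s * (\<integral>\<omega>. (W \<omega> - W' \<omega>) * (stein_sol z (W \<omega>) - stein_sol z (W' \<omega>)) \<partial>M)"
proof -
  define \<phi> where "\<phi> x = stein_drift z x + indicator {..z} (x + s * \<delta>) - F z" for x
  have [measurable]: "\<phi> \<in> borel_measurable borel" unfolding \<phi>_def[abs_def] by measurable
  have "\<bar>\<phi> x\<bar> \<le> 2" for x
    using abs_stein_drift_le[of z x] F_nonneg[of z] F_le_1[of z] by (auto simp: \<phi>_def indicator_def)
  then have int_\<phi>: "integrable M (\<lambda>\<omega>. \<phi> (W \<omega>) * (W \<omega> - W' \<omega>)\<^sup>2)"
    by (intro integrable_bounded_mult[OF integrable_sq_diff]) auto
  have int_Q: "integrable M (\<lambda>\<omega>. (W \<omega> - W' \<omega>) * (stein_sol z (W \<omega>) - stein_sol z (W' \<omega>)))"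
    using integrable_diff_mult_stein_sol[OF W, of z] integrable_diff_mult_stein_sol[OF W', of z]
    by (simp add: right_diff_distrib)
  have "AE \<omega> in M. s * (\<phi> (W \<omega>) * (W \<omega> - W' \<omega>)\<^sup>2)
        - \<delta> * (W \<omega> - W' \<omega>)\<^sup>2 * (c1 * c3 / 2 + 2 * (c0 * \<bar>g (W \<omega>)\<bar>))
      \<le> s * ((W \<omega> - W' \<omega>) * (stein_sol z (W \<omega>) - stein_sol z (W' \<omega>)))"
    using bdd
  proof eventually_elim
    case (elim \<omega>)
    show ?case
      using stein_sol_increment_bound[OF H3 small elim s, of z] by (simp add: \<phi>_def algebra_simps)
  qed
  then have "(\<integral>\<omega>. s * (\<phi> (W \<omega>) * (W \<omega> - W' \<omega>)\<^sup>2)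
        - \<delta> * (W \<omega> - W' \<omega>)\<^sup>2 * (c1 * c3 / 2 + 2 * (c0 * \<bar>g (W \<omega>)\<bar>)) \<partial>M)
      \<le> (\<integral>\<omega>. s * ((W \<omega> - W' \<omega>) * (stein_sol z (W \<omega>) - stein_sol z (W' \<omega>))) \<partial>M)"
    by (intro integral_mono_AE) (use int_\<phi> integrable_drift_error int_Q in simp_all)
  then show ?thesis
    using int_\<phi> integrable_drift_error int_Q by (simp add: \<phi>_def)
qed

text \<open>Integrating \<open>stein_sol_increment_bound\<close> and applying the Stein identity, the drift term
  cancels against its counterpart in the decomposition of the test function along
  \<open>var_defect\<close>; \<open>s = 1\<close> and \<open>s = -1\<close> give the lower and the upper estimate.\<close>
lemma shifted_step_bound:
  assumes s: "s = 1 \<or> s = -1"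
  shows "s * ((\<integral>\<omega>. indicator {..z} (W \<omega> + s * \<delta>) \<partial>M) - F z)
    \<le> 2 * (\<integral>\<omega>. \<bar>var_defect \<omega>\<bar> \<partial>M) + c0 / c1 * (\<integral>\<omega>. \<bar>r (W \<omega>)\<bar> \<partial>M)
      + c0 * \<delta> ^ 3 * (c1 * c3 / 4 + (\<integral>\<omega>. c0 * \<bar>g (W \<omega>)\<bar> \<partial>M))"
proof -
  define \<phi> where "\<phi> x = stein_drift z x + indicator {..z} (x + s * \<delta>) - F z" for x
  have [measurable]: "\<phi> \<in> borel_measurable borel" unfolding \<phi>_def[abs_def] by measurable
  have \<phi>_bd: "\<bar>\<phi> x\<bar> \<le> 2" for x
    using abs_stein_drift_le[of z x] F_nonneg[of z] F_le_1[of z] by (auto simp: \<phi>_def indicator_def)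
  have int_ind: "integrable M (\<lambda>\<omega>. indicator {..z} (W \<omega> + s * \<delta>) :: real)"
    by (rule M.integrable_const_bound[where B=1]) auto
  have int_drift: "integrable M (\<lambda>\<omega>. stein_drift z (W \<omega>))"
    by (rule M.integrable_const_bound[where B=1]) (use abs_stein_drift_le in auto)
  define iQ where "iQ = (\<integral>\<omega>. (W \<omega> - W' \<omega>) * (stein_sol z (W \<omega>) - stein_sol z (W' \<omega>)) \<partial>M)"
  define i\<phi>D where "i\<phi>D = (\<integral>\<omega>. \<phi> (W \<omega>) * (W \<omega> - W' \<omega>)\<^sup>2 \<partial>M)"
  define iR where "iR = (\<integral>\<omega>. \<delta> * (W \<omega> - W' \<omega>)\<^sup>2 * (c1 * c3 / 2 + 2 * (c0 * \<bar>g (W \<omega>)\<bar>)) \<partial>M)"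
  have "s * i\<phi>D - iR \<le> s * iQ"
    using integrated_increment_bound[OF s, of z] by (simp add: i\<phi>D_def \<phi>_def iR_def iQ_def)
  then have "(c0 / 2) * (s * i\<phi>D - iR) \<le> (c0 / 2) * (s * iQ)"
    using c0 by (intro mult_left_mono) auto
  then have main: "s * ((c0 / 2) * i\<phi>D) \<le> s * ((c0 / 2) * iQ) + (c0 / 2) * iR"
    by (simp add: algebra_simps)
  have \<phi>: "(\<integral>\<omega>. \<phi> (W \<omega>) \<partial>M)
      = (\<integral>\<omega>. \<phi> (W \<omega>) * var_defect \<omega> \<partial>M) + (c0 / 2) * i\<phi>D"
    "\<bar>\<integral>\<omega>. \<phi> (W \<omega>) * var_defect \<omega> \<partial>M\<bar> \<le> 2 * (\<integral>\<omega>. \<bar>var_defect \<omega>\<bar> \<partial>M)"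
    unfolding i\<phi>D_def by (rule integral_test_eq_var_defect[OF _ \<phi>_bd], simp)+
  have "(\<integral>\<omega>. \<phi> (W \<omega>) \<partial>M)
      = (\<integral>\<omega>. stein_drift z (W \<omega>) \<partial>M) + ((\<integral>\<omega>. indicator {..z} (W \<omega> + s * \<delta>) \<partial>M) - F z)"
    using int_ind int_drift by (simp add: \<phi>_def M.prob_space)
  moreover have "(c0 / 2) * iQ
      = (\<integral>\<omega>. stein_drift z (W \<omega>) \<partial>M) + c0 * (\<integral>\<omega>. stein_sol z (W \<omega>) * r (W \<omega>) \<partial>M)"
    unfolding iQ_def by (rule stein_identity)
  moreover have "(c0 / 2) * iR \<le> c0 * \<delta> ^ 3 * (c1 * c3 / 4 + (\<integral>\<omega>. c0 * \<bar>g (W \<omega>)\<bar> \<partial>M))"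
    using mult_left_mono[OF drift_error_bound, of "c0 / 2"] c0 by (simp add: iR_def algebra_simps)
  ultimately show ?thesis
    using s main \<phi> remainder_bound[of z] by (auto simp: abs_le_iff)
qed

lemma integral_indicator_W: "(\<integral>\<omega>. indicator {..z} (W \<omega>) \<partial>M) = measure M {\<omega> \<in> space M. W \<omega> \<le> z}"
proof -
  have "(\<integral>\<omega>. indicator {..z} (W \<omega>) \<partial>M) = (\<integral>\<omega>. indicator {\<omega> \<in> space M. W \<omega> \<le> z} \<omega> \<partial>M :: real)"
    by (rule Bochner_Integration.integral_cong) (auto simp: indicator_def)
  then show ?thesis by (simp add: Int_absorb2 subset_eq)
qed

lemma cdf_distance_le:
  "\<bar>measure M {\<omega> \<in> space M. W \<omega> \<le> z} - F z\<bar>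
    \<le> 2 * (\<integral>\<omega>. \<bar>var_defect \<omega>\<bar> \<partial>M) + c1 * \<delta> + c0 / c1 * (\<integral>\<omega>. \<bar>r (W \<omega>)\<bar> \<partial>M)
      + c0 * \<delta> ^ 3 * (c1 * c3 / 4 + (\<integral>\<omega>. c0 * \<bar>g (W \<omega>)\<bar> \<partial>M))"
proof -
  have "(\<integral>\<omega>. indicator {..z + \<delta>} (W \<omega> + \<delta>) \<partial>M) = measure M {\<omega> \<in> space M. W \<omega> \<le> z}"
    "(\<integral>\<omega>. indicator {..z - \<delta>} (W \<omega> - \<delta>) \<partial>M) = measure M {\<omega> \<in> space M. W \<omega> \<le> z}"
    by (simp_all add: indicator_def flip: integral_indicator_W)
  then show ?thesis
    using shifted_step_bound[of 1 "z + \<delta>"] shifted_step_bound[of "-1" "z - \<delta>"]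
      F_lipschitz[of z "z + \<delta>"] F_lipschitz[of "z - \<delta>" z] delta_nonneg
    by (auto simp: abs_le_iff)
qed

lemma cdf_distance_le_kolmogorov_bound:
  "ennreal \<bar>measure M {\<omega> \<in> space M. W \<omega> \<le> z} - F z\<bar> \<le> kolmogorov_bound M W W' r c3 \<delta>"
proof -
  define P where "P = measure M {\<omega> \<in> space M. W \<omega> \<le> z}"
  define A where "A = (\<integral>\<omega>. \<bar>var_defect \<omega>\<bar> \<partial>M)"
  define R where "R = (\<integral>\<omega>. \<bar>r (W \<omega>)\<bar> \<partial>M)"
  define G where "G = (\<integral>\<omega>. c0 * \<bar>g (W \<omega>)\<bar> \<partial>M)"
  have nonneg: "0 \<le> A" "0 \<le> R" "0 \<le> G" "0 \<le> c3" "0 \<le> \<delta>"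
    using c0 c3_nonneg[OF H3] delta_nonneg by (simp_all add: A_def R_def G_def)
  have "c1 * \<delta> \<le> c1 * max 1 c3 * \<delta>"
    using c1_pos nonneg by (intro mult_right_mono) auto
  moreover have "c0 / c1 * R \<le> 2 * c0 / c1 * R"
    using c0 c1_pos nonneg by (intro mult_right_mono divide_right_mono) auto
  moreover have "c0 * \<delta> ^ 3 * (c1 * c3 / 4 + G) \<le> \<delta> ^ 3 * c0 * ((2 + c3 / 2) * G + c1 * c3 / 2)"
  proof -
    have "c1 * c3 / 4 + G \<le> (2 + c3 / 2) * G + c1 * c3 / 2"
      using c1_pos nonneg by (simp add: algebra_simps)
    then show ?thesis using c0 nonneg by (simp add: mult_left_mono mult.commute)
  qed
  ultimately have real_bound:
    "\<bar>P - F z\<bar> \<le> 3 * A + c1 * max 1 c3 * \<delta> + 2 * c0 / c1 * R + \<delta> ^ 3 * c0 * ((2 + c3 / 2) * G + c1 * c3 / 2)"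
    using cdf_distance_le[of z, folded P_def A_def R_def G_def] nonneg by linarith
  have A_eq: "(\<integral>\<^sup>+ \<omega>. ennreal \<bar>var_defect \<omega>\<bar> \<partial>M) = ennreal A"
    unfolding A_def using integrable_var_defect by (intro nn_integral_eq_integral) auto
  have R_eq: "(\<integral>\<^sup>+ \<omega>. ennreal \<bar>r (W \<omega>)\<bar> \<partial>M) = ennreal R"
    unfolding R_def using r_W_integrable by (intro nn_integral_eq_integral) auto
  have G_eq: "(\<integral>\<^sup>+ \<omega>. ennreal \<bar>c0 * g (W \<omega>)\<bar> \<partial>M) = ennreal G"
    unfolding G_def using integrable_g_W c0 by (simp add: abs_mult nn_integral_eq_integral)
  have terms_nonneg: "0 \<le> c1 * max 1 c3 * \<delta>" "0 \<le> 2 * c0 / c1 * R" "0 \<le> \<delta> ^ 3 * c0"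
    "0 \<le> (2 + c3 / 2) * G" "0 \<le> c1 * c3 / 2"
    using nonneg c0 c1_pos by simp_all
  have "ennreal \<bar>P - F z\<bar>
      \<le> ennreal (3 * A + c1 * max 1 c3 * \<delta> + 2 * c0 / c1 * R + \<delta> ^ 3 * c0 * ((2 + c3 / 2) * G + c1 * c3 / 2))"
    using real_bound by (rule ennreal_leI)
  also have "\<dots> = 3 * ennreal A + ennreal (c1 * max 1 c3 * \<delta>) + ennreal (2 * c0 / c1) * ennreal R
      + ennreal (\<delta> ^ 3 * c0) * (ennreal (2 + c3 / 2) * ennreal G + ennreal (c1 * c3 / 2))"
  proof -
    have "ennreal (2 * c0 * R / c1) = ennreal (2 * c0 / c1) * ennreal R"
      using nonneg c0 c1_pos by (simp add: ennreal_mult[symmetric])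
    then show ?thesis
      using nonneg terms_nonneg c0 c1_pos
      by (simp add: ennreal_plus ennreal_mult ennreal_mult' ennreal_mult'' mult_nonneg_nonneg)
  qed
  finally show ?thesis
    unfolding kolmogorov_bound_def A_eq R_eq G_eq P_def .
qed

end

theorem theorem1p2:
  fixes M :: "'a measure" and N :: "'b measure"
    and W W' :: "'a \<Rightarrow> real" and Y :: "'b \<Rightarrow> real"
    and g r :: "real \<Rightarrow> real" and c0 c1 c3 \<delta> :: real
  assumes M: "prob_space M"
    and W: "W \<in> borel_measurable M" and W': "W' \<in> borel_measurable M"
    and exch: "exchangeable M W W'"
    and g_diff: "\<And>x. g differentiable (at x)"
    and r_meas: "r \<in> borel_measurable borel"
    and cond: "AE \<omega> in M. real_cond_exp M (vimage_algebra (space M) W borel) (\<lambda>\<omega>. W \<omega> - W' \<omega>) \<omega>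
                  = g (W \<omega>) + r (W \<omega>)"
    and c0: "c0 > 0"
    and int_fin: "integrable lborel (\<lambda>t. exp (- c0 * Gfun g t))"
    and c1: "c1 = 1 / (\<integral>t. exp (- c0 * Gfun g t) \<partial>lborel)"
    and N: "prob_space N"
    and Y: "distributed N lborel Y (\<lambda>t. ennreal (c1 * exp (- c0 * Gfun g t)))"
    and H1: "mono g" "\<And>t. t > 0 \<Longrightarrow> g t \<ge> 0" "\<And>t. t \<le> 0 \<Longrightarrow> g t \<le> 0"
    and H3: "\<And>x. min_inv c0 c1 g x * (\<bar>x\<bar> + 3 / c1) * (c0 * \<bar>deriv g x\<bar>) \<le> c3"
    and bdd: "AE \<omega> in M. \<bar>W \<omega> - W' \<omega>\<bar> \<le> \<delta>"
  shows "ennreal \<bar>measure M {\<omega> \<in> space M. W \<omega> \<le> z} - measure N {y \<in> space N. Y y \<le> z}\<bar>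
    \<le> 3 * (\<integral>\<^sup>+ \<omega>. ennreal \<bar>1 - (c0 / 2) *
              real_cond_exp M (vimage_algebra (space M) W borel) (\<lambda>\<omega>. (W \<omega> - W' \<omega>)\<^sup>2) \<omega>\<bar> \<partial>M)
      + ennreal (c1 * max 1 c3 * \<delta>)
      + ennreal (2 * c0 / c1) * (\<integral>\<^sup>+ \<omega>. ennreal \<bar>r (W \<omega>)\<bar> \<partial>M)
      + ennreal (\<delta> ^ 3 * c0) * (ennreal (2 + c3 / 2) * (\<integral>\<^sup>+ \<omega>. ennreal \<bar>c0 * g (W \<omega>)\<bar> \<partial>M)
                                  + ennreal (c1 * c3 / 2))"
proof -
  interpret potential_density g c0 c1 N Y
    by (rule potential_density.intro[OF g_diff H1 c0 int_fin c1 N Y])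
  have "measure N {y \<in> space N. Y y \<le> z} = F z" by (simp add: F_def)
  moreover have "ennreal \<bar>measure M {\<omega> \<in> space M. W \<omega> \<le> z} - F z\<bar> \<le> kolmogorov_bound M W W' r c3 \<delta>"
  proof (cases "c1 * max 1 c3 * \<delta> < 1 \<and> integrable M (\<lambda>\<omega>. r (W \<omega>))")
    case True
    have "AE \<omega> in M. 0 \<le> \<delta>" using bdd by eventually_elim auto
    then have "0 \<le> \<delta>" using prob_space.AE_const[OF M] by simp
    then have "c1 * c3 * \<delta> \<le> c1 * max 1 c3 * \<delta>"
      using c1_pos by (intro mult_right_mono mult_left_mono) auto
    then have small: "c1 * c3 * \<delta> \<le> 1" using True by linarith
    interpret exchangeable_stein_pair g c0 c1 N Y M W W' r c3 \<delta>
      using True by (intro exchangeable_stein_pair.intro[OF potential_density_axioms]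
          exchangeable_stein_pair_axioms.intro[OF M W W' exch r_meas cond H3 bdd small]) simp
    show ?thesis by (rule cdf_distance_le_kolmogorov_bound)
  next
    case False
    then show ?thesis
      using M W r_meas by (intro cdf_distance_le_kolmogorov_bound_degenerate) auto
  qed
  ultimately show ?thesis by (simp add: kolmogorov_bound_def)
qed

end
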